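(* Let $U$ be a nonempty set, $\pi$ a fixed partition on $U$, and let $\mathcal{B}_\pi=\{\sigma\Rightarrow\pi:\sigma \text{ a partition on } U\}$. Let $\pi_{ns}$ be the set of blocks of $\pi$ with at least two elements. Then the map $\Phi:\mathcal{B}_\pi\to\wp(\pi_{ns})$ sending $\sigma\Rightarrow\pi$ to the set of blocks $B\in\pi_{ns}$ that are contained in some block of $\sigma$ is a well-defined bijection, and for all partitions $\sigma,\tau$ on $U$: (i) $(\sigma\Rightarrow\pi)\vee(\tau\Rightarrow\pi)\in\mathcal{B}_\pi$ and $\Phi$ of it equals $\Phi(\sigma\Rightarrow\pi)\cup\Phi(\tau\Rightarrow\pi)$; (ii) $(\sigma\Rightarrow\pi)\wedge(\tau\Rightarrow\pi)\in\mathcal{B}_\pi$ and $\Phi$ of it equals $\Phi(\sigma\Rightarrow\pi)\cap\Phi(\tau\Rightarrow\pi)$; (iii) $(\sigma\Rightarrow\pi)\Rightarrow(\tau\Rightarrow\pi)\in\mathcal{B}_\pi$ and $\Phi$ of it equals $(\pi_{ns}\setminus\Phi(\sigma\Rightarrow\pi))\cup\Phi(\tau\Rightarrow\pi)$; in particular $\Phi((\sigma\Rightarrow\pi)\Rightarrow\pi)=\pi_{ns}\setminus\Phi(\sigma\Rightarrow\pi)$; (iv) $\pi=\mathbf{1}\Rightarrow\pi\in\mathcal{B}_\pi$ with $\Phi(\pi)=\emptyset$ and $\mathbf{1}=\pi\Rightarrow\pi\in\mathcal{B}_\pi$ with $\Phi(\mathbf{1})=\pi_{ns}$. Consequently $\mathcal{B}_\pi$,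 with the partition join, meet, and $\pi$-negation $\overset{\pi}{\lnot}\sigma:=\sigma\Rightarrow\pi$ as complement, is a Boolean algebra isomorphic to $\wp(\pi_{ns})$, with bottom $\pi$ and top $\mathbf{1}$, contained in the interval $[\pi,\mathbf{1}]$ of the refinement order.
   Context: A partition on a set $U$ is a set of non-empty, pairwise disjoint subsets of $U$ (called blocks) whose union is $U$. Refinement: $\sigma\precsim\pi$ iff every block of $\pi$ is contained in some block of $\sigma$. The discrete partition is $\mathbf{1}=\{\{u\}:u\in U\}$ and the indiscrete partition is $\mathbf{0}=\{U\}$. The join $\pi\vee\sigma$ is the partition whose blocks are the non-empty intersections $B\cap C$, $B\in\pi$, $C\in\sigma$. The meet $\pi\wedge\sigma$ is the partition whose blocks are the equivalence classes of the equivalence relation on $U$ generated by: $u\sim u'$ if $u,u'$ lie in a common block of $\pi$ or in a common block of $\sigma$. The partition implication $\sigma\Rightarrow\pi$ is the partition obtained from $\pi$ by replacing every block $B\in\pi$ that is contained in some block of $\sigma$ by the singletons $\{u\}$, $u\in B$, and leaving every block of $\pi$ not contained in any block of $\sigma$ unchanged. *)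

theory Defs
  imports Main "HOL-Library.Disjoint_Sets"
begin

definition prefines :: "'a set set \<Rightarrow> 'a set set \<Rightarrow> bool" where
  "prefines \<sigma> \<pi> \<longleftrightarrow> (\<forall>B\<in>\<pi>. \<exists>C\<in>\<sigma>. B \<subseteq> C)"

text \<open>Discrete partition 1 and indiscrete partition 0.\<close>
definition pdiscrete :: "'a set \<Rightarrow> 'a set set" where
  "pdiscrete U = {{u} | u. u \<in> U}"

definition pindiscrete :: "'a set \<Rightarrow> 'a set set" where
  "pindiscrete U = {U}"

definition pjoin :: "'a set set \<Rightarrow> 'a set set \<Rightarrow> 'a set set" where
  "pjoin \<pi> \<sigma> = {B \<inter> C | B C. B \<in> \<pi> \<and> C \<in> \<sigma> \<and> B \<inter> C \<noteq> {}}"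

definition pmeet :: "'a set \<Rightarrow> 'a set set \<Rightarrow> 'a set set \<Rightarrow> 'a set set" where
  "pmeet U \<pi> \<sigma> =
     U // (({(u, v). \<exists>B \<in> \<pi> \<union> \<sigma>. u \<in> B \<and> v \<in> B} \<union> Id_on U)\<^sup>*)"

definition pimp :: "'a set set \<Rightarrow> 'a set set \<Rightarrow> 'a set set" where
  "pimp \<sigma> \<pi> =
     {B \<in> \<pi>. \<not> (\<exists>C\<in>\<sigma>. B \<subseteq> C)}
     \<union> (\<Union>B \<in> {B \<in> \<pi>. \<exists>C\<in>\<sigma>. B \<subseteq> C}. {{u} | u. u \<in> B})"

definition pns :: "'a set set \<Rightarrow> 'a set set" where
  "pns \<pi> = {B \<in> \<pi>. \<exists>x y. x \<in> B \<and> y \<in> B \<and> x \<noteq> y}"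

definition Bpi :: "'a set \<Rightarrow> 'a set set \<Rightarrow> 'a set set set" where
  "Bpi U \<pi> = {pimp \<sigma> \<pi> | \<sigma>. partition_on U \<sigma>}"

definition Phi_of :: "'a set set \<Rightarrow> 'a set set \<Rightarrow> 'a set set" where
  "Phi_of \<pi> \<sigma> = {B \<in> pns \<pi>. \<exists>C\<in>\<sigma>. B \<subseteq> C}"

text \<open>Phi on B_pi: Phi(sigma \<Rightarrow> pi) = Phi_of pi sigma, using some chosen
  representative sigma (well-definedness is part of the theorem).\<close>
definition Phi :: "'a set \<Rightarrow> 'a set set \<Rightarrow> 'a set set \<Rightarrow> 'a set set" where
  "Phi U \<pi> \<rho> = Phi_of \<pi> (SOME \<sigma>. partition_on U \<sigma> \<and> \<rho> = pimp \<sigma> \<pi>)"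

end

theory Submission
  imports Defs
begin

text \<open>Write \<open>shatter \<pi> S\<close> for the partition obtained from \<pi> by breaking every block
  in S into singletons. Then \<open>\<sigma> \<Rightarrow> \<pi>\<close> is \<pi> shattered at the non-singleton blocks that
  lie inside a block of \<sigma>, and shattering is injective on subsets of \<open>\<pi>\<^sub>n\<^sub>s\<close>, because the
  surviving non-singleton blocks record S. Hence \<open>\<B>\<^sub>\<pi>\<close> is the image of \<open>\<wp>(\<pi>\<^sub>n\<^sub>s)\<close>
  under shattering and \<Phi> is its inverse. Join, meet and implication of shattered
  partitions are shattered partitions again, at \<open>S \<union> T\<close>, \<open>S \<inter> T\<close> and
  \<open>(\<pi>\<^sub>n\<^sub>s - S) \<union> T\<close>, which transports the Boolean operations.\<close>

definition shatter :: "'a set set \<Rightarrow> 'a set set \<Rightarrow> 'a set set" where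
  "shatter \<pi> S = (\<pi> - S) \<union> {{u} | u. u \<in> \<Union>S}"

lemma in_shatter_iff:
  "X \<in> shatter \<pi> S \<longleftrightarrow> X \<in> \<pi> \<and> X \<notin> S \<or> (\<exists>u\<in>\<Union>S. X = {u})"
  unfolding shatter_def by blast

lemma shatter_empty [simp]: "shatter \<pi> {} = \<pi>"
  unfolding shatter_def by auto

lemma shatter_shatter: "shatter (shatter \<pi> T) R = shatter \<pi> (T \<union> R)"
  unfolding shatter_def by blast

lemma pns_subset: "pns \<pi> \<subseteq> \<pi>"
  unfolding pns_def by blast

lemma block_notin_pns_eq_singleton: "B \<in> \<pi> \<Longrightarrow> B \<notin> pns \<pi> \<Longrightarrow> u \<in> B \<Longrightarrow> B = {u}"
  unfolding pns_def by blast

lemma pns_shatter: "pns (shatter \<pi> T) = pns \<pi> - T"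
  unfolding pns_def shatter_def by blast

lemma pns_inter_shatter: "pns \<pi> \<inter> shatter \<pi> S = pns \<pi> - S"
  unfolding pns_def shatter_def by blast

lemma inj_on_shatter: "inj_on (shatter \<pi>) (Pow (pns \<pi>))"
proof (rule inj_onI)
  fix S T assume "S \<in> Pow (pns \<pi>)" "T \<in> Pow (pns \<pi>)" "shatter \<pi> S = shatter \<pi> T"
  then show "S = T" using pns_inter_shatter[of \<pi> S] pns_inter_shatter[of \<pi> T] by blast
qed

lemma partition_on_shatter:
  assumes "partition_on U \<pi>" "S \<subseteq> \<pi>"
  shows "partition_on U (shatter \<pi> S)"
proof (rule partition_onI)
  show "\<Union>(shatter \<pi> S) = U"
    using assms partition_onD1[OF assms(1)] unfolding shatter_def by blast
  show "{} \<notin> shatter \<pi> S"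
    using partition_onD3[OF assms(1)] unfolding shatter_def by blast
  have disj: "disjoint \<pi>" using assms(1) by (rule partition_onD2)
  have singleton_disjnt: "disjnt {u} Q"
    if "u \<in> \<Union>S" "Q \<in> shatter \<pi> S" "{u} \<noteq> Q" for u Q
  proof -
    from that(1) obtain B where "B \<in> S" "u \<in> B" by blast
    with assms(2) disj have "Q \<inter> B = {}" if "Q \<in> \<pi> - S"
      using that disjointD[of \<pi> Q B] by blast
    with \<open>u \<in> B\<close> that(2,3) show ?thesis
      unfolding in_shatter_iff disjnt_def by auto
  qed
  show "disjnt P Q" if PQ: "P \<in> shatter \<pi> S" "Q \<in> shatter \<pi> S" "P \<noteq> Q" for P Q
  proof -
    consider "P \<in> \<pi>" "Q \<in> \<pi>" | u where "u \<in> \<Union>S" "P = {u}" | u where "u \<in> \<Union>S" "Q = {u}"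
      using PQ(1,2) unfolding in_shatter_iff by blast
    then show ?thesis
    proof cases
      case 1
      with PQ(3) show ?thesis unfolding disjnt_def by (intro disjointD[OF disj])
    next
      case 2
      with PQ singleton_disjnt show ?thesis by blast
    next
      case 3
      with PQ singleton_disjnt show ?thesis by (metis disjnt_sym)
    qed
  qed
qed

lemma nontrivial_block_of_shatter:
  assumes "C \<in> shatter \<pi> S" "x \<in> C" "y \<in> C" "x \<noteq> y"
  shows "C \<in> \<pi> - S"
proof (rule ccontr)
  assume "C \<notin> \<pi> - S"
  with assms(1) obtain u where "C = {u}" unfolding in_shatter_iff by blast
  with assms(2-4) show False by simp
qed

lemma Phi_of_shatter:
  assumes "disjoint \<pi>"
  shows "Phi_of \<pi> (shatter \<pi> S) = pns \<pi> - S"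
proof (rule set_eqI, rule iffI)
  fix B assume "B \<in> Phi_of \<pi> (shatter \<pi> S)"
  then obtain C where B: "B \<in> pns \<pi>" "C \<in> shatter \<pi> S" "B \<subseteq> C"
    unfolding Phi_of_def by blast
  then obtain x y where xy: "x \<in> B" "y \<in> B" "x \<noteq> y" "B \<in> \<pi>"
    unfolding pns_def by blast
  with B have C: "C \<in> \<pi> - S"
    by (intro nontrivial_block_of_shatter[of C \<pi> S x y]) auto
  have "B = C"
    using disjointD[OF assms xy(4), of C] C xy(1) B(3) by blast
  with B C show "B \<in> pns \<pi> - S" by simp
next
  fix B assume "B \<in> pns \<pi> - S"
  then have "B \<in> shatter \<pi> S" "B \<in> pns \<pi>"
    using pns_subset unfolding in_shatter_iff by auto
  then show "B \<in> Phi_of \<pi> (shatter \<pi> S)"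
    unfolding Phi_of_def by blast
qed

lemma pimp_eq_shatter:
  assumes "{} \<notin> \<pi>"
  shows "pimp \<sigma> \<pi> = shatter \<pi> (Phi_of \<pi> \<sigma>)"
proof (rule set_eqI, rule iffI)
  fix X assume "X \<in> pimp \<sigma> \<pi>"
  then consider "X \<in> \<pi>" "\<not> (\<exists>C\<in>\<sigma>. X \<subseteq> C)"
    | u B where "B \<in> \<pi>" "\<exists>C\<in>\<sigma>. B \<subseteq> C" "u \<in> B" "X = {u}"
    unfolding pimp_def by blast
  then show "X \<in> shatter \<pi> (Phi_of \<pi> \<sigma>)"
  proof cases
    case 1
    then show ?thesis unfolding in_shatter_iff Phi_of_def by blast
  next
    case 2
    then show ?thesis
      using block_notin_pns_eq_singleton[of B \<pi> u]
      unfolding in_shatter_iff Phi_of_def by blast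
  qed
next
  fix X assume X: "X \<in> shatter \<pi> (Phi_of \<pi> \<sigma>)"
  show "X \<in> pimp \<sigma> \<pi>"
  proof (cases "X \<in> \<pi> \<and> X \<notin> Phi_of \<pi> \<sigma>")
    case True
    moreover obtain u where "u \<in> X" using True assms by (metis ex_in_conv)
    ultimately show ?thesis
      using block_notin_pns_eq_singleton[of X \<pi> u]
      unfolding pimp_def Phi_of_def by blast
  next
    case False
    with X show ?thesis
      unfolding in_shatter_iff pimp_def Phi_of_def pns_def by blast
  qed
qed

lemma shatter_pns:
  assumes "partition_on U \<pi>"
  shows "shatter \<pi> (pns \<pi>) = pdiscrete U"
proof -
  have "X \<in> shatter \<pi> (pns \<pi>) \<longleftrightarrow> (\<exists>u\<in>U. X = {u})" for X
  proof
    assume X: "X \<in> shatter \<pi> (pns \<pi>)"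
    show "\<exists>u\<in>U. X = {u}"
    proof (cases "X \<in> \<pi> - pns \<pi>")
      case True
      with partition_onD3[OF assms] obtain u where "u \<in> X"
        by (metis DiffD1 ex_in_conv)
      with True partition_onD1[OF assms] show ?thesis
        using block_notin_pns_eq_singleton[of X \<pi> u] by blast
    next
      case False
      with X pns_subset partition_onD1[OF assms] show ?thesis
        unfolding in_shatter_iff by blast
    qed
  next
    assume "\<exists>u\<in>U. X = {u}"
    then obtain u B where "X = {u}" "B \<in> \<pi>" "u \<in> B"
      using partition_onD1[OF assms] by blast
    then show "X \<in> shatter \<pi> (pns \<pi>)"
      using block_notin_pns_eq_singleton[of B \<pi> u] unfolding in_shatter_iff by blast
  qed
  then show ?thesis unfolding pdiscrete_def by blast
qed

lemma partition_on_pdiscrete: "partition_on U (pdiscrete U)"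
proof -
  have "pdiscrete U = (\<lambda>x. {x}) ` U" unfolding pdiscrete_def by blast
  then show ?thesis using partition_on_singletons by metis
qed

lemma prefines_pdiscrete: "partition_on U \<rho> \<Longrightarrow> prefines \<rho> (pdiscrete U)"
  unfolding prefines_def pdiscrete_def partition_on_def by blast

lemma prefines_shatter: "S \<subseteq> \<pi> \<Longrightarrow> prefines \<pi> (shatter \<pi> S)"
  unfolding prefines_def shatter_def by blast

lemma pjoin_shatter:
  assumes \<pi>: "partition_on U \<pi>" and S: "S \<subseteq> \<pi>" and T: "T \<subseteq> \<pi>"
  shows "pjoin (shatter \<pi> S) (shatter \<pi> T) = shatter \<pi> (S \<union> T)"
proof (rule set_eqI, rule iffI)
  fix X assume "X \<in> pjoin (shatter \<pi> S) (shatter \<pi> T)"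
  then obtain B C where X: "X = B \<inter> C" "X \<noteq> {}" and B: "B \<in> shatter \<pi> S" and C: "C \<in> shatter \<pi> T"
    unfolding pjoin_def by blast
  consider "B \<in> \<pi> - S" "C \<in> \<pi> - T" | u where "u \<in> \<Union>S" "B = {u}" | u where "u \<in> \<Union>T" "C = {u}"
    using B C unfolding in_shatter_iff by blast
  then show "X \<in> shatter \<pi> (S \<union> T)"
  proof cases
    case 1
    then have "B = C"
      using X disjointD[OF partition_onD2[OF \<pi>], of B C] by blast
    with 1 X show ?thesis unfolding in_shatter_iff by simp
  next
    case 2
    with X have "X = {u}" by blast
    with 2 show ?thesis unfolding in_shatter_iff by blast
  next
    case 3
    with X have "X = {u}" by blast
    with 3 show ?thesis unfolding in_shatter_iff by blast
  qed
next
  fix X assume X: "X \<in> shatter \<pi> (S \<union> T)"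
  have covered: "\<exists>C\<in>shatter \<pi> R. u \<in> C" if "u \<in> \<Union>(S \<union> T)" "R \<subseteq> \<pi>" for u R
  proof -
    from that(1) S T partition_onD1[OF \<pi>] have "u \<in> U" by blast
    with partition_onD1[OF partition_on_shatter[OF \<pi> that(2)]] show ?thesis by blast
  qed
  show "X \<in> pjoin (shatter \<pi> S) (shatter \<pi> T)"
  proof (cases "X \<in> \<pi> - (S \<union> T)")
    case True
    then have "X \<in> shatter \<pi> S" "X \<in> shatter \<pi> T" "X \<noteq> {}"
      using partition_onD3[OF \<pi>] unfolding in_shatter_iff by auto
    then show ?thesis unfolding pjoin_def by blast
  next
    case False
    with X obtain u where u: "u \<in> \<Union>(S \<union> T)" "X = {u}"
      unfolding in_shatter_iff by blast
    obtain B C where BC: "B \<in> shatter \<pi> S" "C \<in> shatter \<pi> T" "u \<in> B" "u \<in> C"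
      using covered[OF u(1) S] covered[OF u(1) T] by blast
    from u(1) have "{u} \<in> shatter \<pi> S \<or> {u} \<in> shatter \<pi> T"
      unfolding in_shatter_iff by blast
    then have "X = {u} \<inter> C \<and> {u} \<in> shatter \<pi> S \<or> X = B \<inter> {u} \<and> {u} \<in> shatter \<pi> T"
      using u(2) BC by blast
    with BC show ?thesis unfolding pjoin_def by blast
  qed
qed

lemma pmeet_eqI:
  assumes \<mu>: "partition_on U \<mu>"
    and coarser: "prefines \<mu> \<rho>" "prefines \<mu> \<rho>'" and blocks: "\<mu> \<subseteq> \<rho> \<union> \<rho>'"
  shows "pmeet U \<rho> \<rho>' = \<mu>"
proof -
  let ?E = "{(x, y). \<exists>B\<in>\<mu>. x \<in> B \<and> y \<in> B}"
  have covered: "\<exists>B\<in>\<mu>. u \<in> B" if "u \<in> U" for u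
    using that partition_onD1[OF \<mu>] by blast
  have generators: "{(u, v). \<exists>B \<in> \<rho> \<union> \<rho>'. u \<in> B \<and> v \<in> B} \<union> Id_on U = ?E"
  proof (intro equalityI subrelI)
    fix u v assume "(u, v) \<in> {(u, v). \<exists>B \<in> \<rho> \<union> \<rho>'. u \<in> B \<and> v \<in> B} \<union> Id_on U"
    then consider B where "B \<in> \<rho> \<union> \<rho>'" "u \<in> B" "v \<in> B" | "u \<in> U" "u = v"
      unfolding Id_on_iff by blast
    then show "(u, v) \<in> ?E"
    proof cases
      case 1
      with coarser obtain C where "C \<in> \<mu>" "B \<subseteq> C"
        unfolding prefines_def by blast
      with 1 show ?thesis by blast
    next
      case 2
      with covered show ?thesis by blast
    qed
  next
    fix u v assume "(u, v) \<in> ?E"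
    with blocks show "(u, v) \<in> {(u, v). \<exists>B \<in> \<rho> \<union> \<rho>'. u \<in> B \<and> v \<in> B} \<union> Id_on U"
      by blast
  qed
  have "trans ?E"
    using equiv_partition_on[OF \<mu>] by (auto elim: equivE)
  then have closure: "?E\<^sup>* = ?E \<union> Id"
    by (simp add: rtrancl_trancl_reflcl)
  have "(?E \<union> Id) `` {x} = ?E `` {x}" if "x \<in> U" for x
  proof -
    have "(x, x) \<in> ?E" using covered[OF that] by blast
    then show ?thesis by (auto simp: Image_Un)
  qed
  then have "U // (?E \<union> Id) = U // ?E"
    unfolding quotient_def by simp
  then show ?thesis
    unfolding pmeet_def generators closure using partition_on_eq_quotient[OF \<mu>] by simp
qed

lemma prefines_shatter_mono:
  assumes \<pi>: "partition_on U \<pi>" and "R \<subseteq> R'" "R' \<subseteq> \<pi>"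
  shows "prefines (shatter \<pi> R) (shatter \<pi> R')"
  unfolding prefines_def
proof
  fix B assume B: "B \<in> shatter \<pi> R'"
  show "\<exists>C\<in>shatter \<pi> R. B \<subseteq> C"
  proof (cases "B \<in> \<pi> - R'")
    case True
    with \<open>R \<subseteq> R'\<close> have "B \<in> shatter \<pi> R"
      unfolding in_shatter_iff by blast
    then show ?thesis by blast
  next
    case False
    with B obtain u where u: "u \<in> \<Union>R'" "B = {u}"
      unfolding in_shatter_iff by blast
    with assms(3) partition_onD1[OF \<pi>] have "u \<in> U" by blast
    with partition_onD1[OF partition_on_shatter[OF \<pi>]] assms(2,3) obtain C
      where "C \<in> shatter \<pi> R" "u \<in> C"
      by (metis UnionE subset_trans)
    with u show ?thesis by blast
  qed
qed

lemma pmeet_shatter: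
  assumes \<pi>: "partition_on U \<pi>" and S: "S \<subseteq> \<pi>" and T: "T \<subseteq> \<pi>"
  shows "pmeet U (shatter \<pi> S) (shatter \<pi> T) = shatter \<pi> (S \<inter> T)"
proof (rule pmeet_eqI)
  show "partition_on U (shatter \<pi> (S \<inter> T))"
    using partition_on_shatter[OF \<pi>] S by blast
  show "prefines (shatter \<pi> (S \<inter> T)) (shatter \<pi> S)"
    "prefines (shatter \<pi> (S \<inter> T)) (shatter \<pi> T)"
    using prefines_shatter_mono[OF \<pi>] S T by blast+
  show "shatter \<pi> (S \<inter> T) \<subseteq> shatter \<pi> S \<union> shatter \<pi> T"
    unfolding shatter_def by blast
qed

lemma pimp_shatter:
  assumes \<pi>: "partition_on U \<pi>"
  shows "pimp (shatter \<pi> S) (shatter \<pi> T) = shatter \<pi> ((pns \<pi> - S) \<union> T)"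
proof -
  have "{} \<notin> shatter \<pi> T"
    using partition_onD3[OF \<pi>] unfolding in_shatter_iff by blast
  then have "pimp (shatter \<pi> S) (shatter \<pi> T)
      = shatter (shatter \<pi> T) (Phi_of (shatter \<pi> T) (shatter \<pi> S))"
    by (rule pimp_eq_shatter)
  also have "Phi_of (shatter \<pi> T) (shatter \<pi> S) = Phi_of \<pi> (shatter \<pi> S) - T"
    unfolding Phi_of_def pns_shatter by blast
  also have "\<dots> = pns \<pi> - S - T"
    using Phi_of_shatter[OF partition_onD2[OF \<pi>]] by simp
  also have "shatter (shatter \<pi> T) (pns \<pi> - S - T) = shatter \<pi> ((pns \<pi> - S) \<union> T)"
    unfolding shatter_shatter by (rule arg_cong[where f = "shatter \<pi>"]) blast
  finally show ?thesis .
qed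

lemma pimp_shatter_complement:
  assumes "partition_on U \<pi>" "S \<subseteq> pns \<pi>"
  shows "pimp (shatter \<pi> (pns \<pi> - S)) \<pi> = shatter \<pi> S"
proof -
  have "pns \<pi> - (pns \<pi> - S) = S" using assms(2) by blast
  then show ?thesis
    using pimp_shatter[OF assms(1), of "pns \<pi> - S" "{}"] by simp
qed

lemma Bpi_eq_image_shatter:
  assumes \<pi>: "partition_on U \<pi>"
  shows "Bpi U \<pi> = shatter \<pi> ` Pow (pns \<pi>)"
proof (intro equalityI subsetI)
  fix \<rho> assume "\<rho> \<in> Bpi U \<pi>"
  then obtain \<sigma> where "\<rho> = pimp \<sigma> \<pi>"
    unfolding Bpi_def by blast
  then have "\<rho> = shatter \<pi> (Phi_of \<pi> \<sigma>)"
    using pimp_eq_shatter[OF partition_onD3[OF \<pi>]] by simp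
  moreover have "Phi_of \<pi> \<sigma> \<subseteq> pns \<pi>"
    unfolding Phi_of_def by blast
  ultimately show "\<rho> \<in> shatter \<pi> ` Pow (pns \<pi>)" by blast
next
  fix \<rho> assume "\<rho> \<in> shatter \<pi> ` Pow (pns \<pi>)"
  then obtain S where S: "S \<subseteq> pns \<pi>" "\<rho> = shatter \<pi> S" by blast
  have "partition_on U (shatter \<pi> (pns \<pi> - S))"
    using partition_on_shatter[OF \<pi>] pns_subset by blast
  with S show "\<rho> \<in> Bpi U \<pi>"
    using pimp_shatter_complement[OF \<pi> S(1)] unfolding Bpi_def by blast
qed

lemma Phi_of_eq_if_pimp_eq:
  assumes "partition_on U \<pi>" "pimp \<sigma> \<pi> = pimp \<sigma>' \<pi>"
  shows "Phi_of \<pi> \<sigma> = Phi_of \<pi> \<sigma>'"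
proof -
  have "shatter \<pi> (Phi_of \<pi> \<sigma>) = shatter \<pi> (Phi_of \<pi> \<sigma>')"
    using assms pimp_eq_shatter[OF partition_onD3[OF assms(1)]] by metis
  moreover have "Phi_of \<pi> \<tau> \<in> Pow (pns \<pi>)" for \<tau>
    unfolding Phi_of_def by blast
  ultimately show ?thesis
    using inj_on_shatter by (metis inj_onD)
qed

text \<open>\<open>Phi\<close> evaluates \<open>Phi_of\<close> at a representative chosen by SOME; by the previous
  lemma the choice does not matter.\<close>

lemma Phi_pimp:
  assumes "partition_on U \<pi>" "partition_on U \<sigma>"
  shows "Phi U \<pi> (pimp \<sigma> \<pi>) = Phi_of \<pi> \<sigma>"
proof -
  let ?\<tau> = "SOME \<tau>. partition_on U \<tau> \<and> pimp \<sigma> \<pi> = pimp \<tau> \<pi>"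
  have "partition_on U ?\<tau> \<and> pimp \<sigma> \<pi> = pimp ?\<tau> \<pi>"
    by (rule someI[where x = \<sigma>]) (simp add: assms(2))
  then show ?thesis
    unfolding Phi_def using Phi_of_eq_if_pimp_eq[OF assms(1)] by metis
qed

lemma Phi_shatter:
  assumes \<pi>: "partition_on U \<pi>" and S: "S \<subseteq> pns \<pi>"
  shows "Phi U \<pi> (shatter \<pi> S) = S"
proof -
  have "partition_on U (shatter \<pi> (pns \<pi> - S))"
    using partition_on_shatter[OF \<pi>] pns_subset by blast
  then have "Phi U \<pi> (shatter \<pi> S) = Phi_of \<pi> (shatter \<pi> (pns \<pi> - S))"
    using Phi_pimp[OF \<pi>] pimp_shatter_complement[OF \<pi> S] by metis
  also have "\<dots> = S"
    using Phi_of_shatter[OF partition_onD2[OF \<pi>]] S by blast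
  finally show ?thesis .
qed

lemma bij_betw_Phi:
  assumes \<pi>: "partition_on U \<pi>"
  shows "bij_betw (Phi U \<pi>) (Bpi U \<pi>) (Pow (pns \<pi>))"
  unfolding Bpi_eq_image_shatter[OF \<pi>]
  by (rule bij_betw_byWitness[where f' = "shatter \<pi>"]) (auto simp: Phi_shatter[OF \<pi>])

lemma Bpi_shatterE:
  assumes "partition_on U \<pi>" "\<rho> \<in> Bpi U \<pi>"
  obtains S where "S \<subseteq> pns \<pi>" "\<rho> = shatter \<pi> S"
  using assms unfolding Bpi_eq_image_shatter[OF assms(1)] by blast

lemma shatter_in_Bpi_Phi:
  assumes "partition_on U \<pi>" "S \<subseteq> pns \<pi>"
  shows "shatter \<pi> S \<in> Bpi U \<pi> \<and> Phi U \<pi> (shatter \<pi> S) = S"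
  using assms Phi_shatter unfolding Bpi_eq_image_shatter[OF assms(1)] by blast

lemma pjoin_Bpi:
  assumes \<pi>: "partition_on U \<pi>" and "\<rho> \<in> Bpi U \<pi>" "\<rho>' \<in> Bpi U \<pi>"
  shows "pjoin \<rho> \<rho>' \<in> Bpi U \<pi> \<and> Phi U \<pi> (pjoin \<rho> \<rho>') = Phi U \<pi> \<rho> \<union> Phi U \<pi> \<rho>'"
proof -
  obtain S T where ST: "S \<subseteq> pns \<pi>" "T \<subseteq> pns \<pi>" and \<rho>: "\<rho> = shatter \<pi> S" "\<rho>' = shatter \<pi> T"
    using Bpi_shatterE[OF \<pi>] assms(2,3) by metis
  have "pjoin \<rho> \<rho>' = shatter \<pi> (S \<union> T)"
    unfolding \<rho> using ST pns_subset by (intro pjoin_shatter[OF \<pi>]) blast+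
  with ST show ?thesis
    unfolding \<rho> using shatter_in_Bpi_Phi[OF \<pi>] by (metis Un_least)
qed

lemma pmeet_Bpi:
  assumes \<pi>: "partition_on U \<pi>" and "\<rho> \<in> Bpi U \<pi>" "\<rho>' \<in> Bpi U \<pi>"
  shows "pmeet U \<rho> \<rho>' \<in> Bpi U \<pi> \<and> Phi U \<pi> (pmeet U \<rho> \<rho>') = Phi U \<pi> \<rho> \<inter> Phi U \<pi> \<rho>'"
proof -
  obtain S T where ST: "S \<subseteq> pns \<pi>" "T \<subseteq> pns \<pi>" and \<rho>: "\<rho> = shatter \<pi> S" "\<rho>' = shatter \<pi> T"
    using Bpi_shatterE[OF \<pi>] assms(2,3) by metis
  have "pmeet U \<rho> \<rho>' = shatter \<pi> (S \<inter> T)"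
    unfolding \<rho> using ST pns_subset by (intro pmeet_shatter[OF \<pi>]) blast+
  with ST show ?thesis
    unfolding \<rho> using shatter_in_Bpi_Phi[OF \<pi>] by (metis le_infI1)
qed

lemma pimp_Bpi:
  assumes \<pi>: "partition_on U \<pi>" and "\<rho> \<in> Bpi U \<pi>" "\<rho>' \<in> Bpi U \<pi>"
  shows "pimp \<rho> \<rho>' \<in> Bpi U \<pi> \<and> Phi U \<pi> (pimp \<rho> \<rho>') = (pns \<pi> - Phi U \<pi> \<rho>) \<union> Phi U \<pi> \<rho>'"
proof -
  obtain S T where ST: "S \<subseteq> pns \<pi>" "T \<subseteq> pns \<pi>" and \<rho>: "\<rho> = shatter \<pi> S" "\<rho>' = shatter \<pi> T"
    using Bpi_shatterE[OF \<pi>] assms(2,3) by metis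
  have "(pns \<pi> - S) \<union> T \<subseteq> pns \<pi>"
    using ST by blast
  with ST show ?thesis
    unfolding \<rho> pimp_shatter[OF \<pi>] using shatter_in_Bpi_Phi[OF \<pi>] by metis
qed

lemma Phi_of_pdiscrete: "Phi_of \<pi> (pdiscrete U) = {}"
proof -
  have "\<not> B \<subseteq> {u}" if "B \<in> pns \<pi>" for B u
    using that unfolding pns_def by auto
  then show ?thesis unfolding Phi_of_def pdiscrete_def by auto
qed

lemma Phi_of_self: "Phi_of \<pi> \<pi> = pns \<pi>"
  unfolding Phi_of_def using pns_subset by auto

lemma pimp_pdiscrete:
  assumes "partition_on U \<pi>"
  shows "pimp (pdiscrete U) \<pi> = \<pi>"
  using pimp_eq_shatter[OF partition_onD3[OF assms]] by (simp add: Phi_of_pdiscrete)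

lemma pimp_self:
  assumes "partition_on U \<pi>"
  shows "pimp \<pi> \<pi> = pdiscrete U"
  using pimp_eq_shatter[OF partition_onD3[OF assms]] shatter_pns[OF assms]
  by (simp add: Phi_of_self)

lemma Bpi_interval:
  assumes \<pi>: "partition_on U \<pi>" and "\<rho> \<in> Bpi U \<pi>"
  shows "partition_on U \<rho> \<and> prefines \<pi> \<rho> \<and> prefines \<rho> (pdiscrete U)"
proof -
  obtain S where S: "S \<subseteq> pns \<pi>" and \<rho>: "\<rho> = shatter \<pi> S"
    using Bpi_shatterE[OF assms] .
  from S have "S \<subseteq> \<pi>" using pns_subset by blast
  then have "partition_on U \<rho>" "prefines \<pi> \<rho>"
    unfolding \<rho> by (rule partition_on_shatter[OF \<pi>], rule prefines_shatter)
  with prefines_pdiscrete show ?thesis by blast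
qed

theorem mainTheorem4:
  fixes U :: "'a set" and \<pi> :: "'a set set"
  assumes "U \<noteq> {}" and "partition_on U \<pi>"
  shows
    "(\<forall>\<sigma> \<sigma>'. partition_on U \<sigma> \<and> partition_on U \<sigma>' \<and> pimp \<sigma> \<pi> = pimp \<sigma>' \<pi>
        \<longrightarrow> Phi_of \<pi> \<sigma> = Phi_of \<pi> \<sigma>')
   \<and> (\<forall>\<sigma>. partition_on U \<sigma> \<longrightarrow> Phi U \<pi> (pimp \<sigma> \<pi>) = Phi_of \<pi> \<sigma>)
   \<and> bij_betw (Phi U \<pi>) (Bpi U \<pi>) (Pow (pns \<pi>))
   \<and> (\<forall>\<sigma> \<tau>. partition_on U \<sigma> \<and> partition_on U \<tau> \<longrightarrow>
        pjoin (pimp \<sigma> \<pi>) (pimp \<tau> \<pi>) \<in> Bpi U \<pi>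
      \<and> Phi U \<pi> (pjoin (pimp \<sigma> \<pi>) (pimp \<tau> \<pi>))
          = Phi U \<pi> (pimp \<sigma> \<pi>) \<union> Phi U \<pi> (pimp \<tau> \<pi>)
      \<and> pmeet U (pimp \<sigma> \<pi>) (pimp \<tau> \<pi>) \<in> Bpi U \<pi>
      \<and> Phi U \<pi> (pmeet U (pimp \<sigma> \<pi>) (pimp \<tau> \<pi>))
          = Phi U \<pi> (pimp \<sigma> \<pi>) \<inter> Phi U \<pi> (pimp \<tau> \<pi>)
      \<and> pimp (pimp \<sigma> \<pi>) (pimp \<tau> \<pi>) \<in> Bpi U \<pi>
      \<and> Phi U \<pi> (pimp (pimp \<sigma> \<pi>) (pimp \<tau> \<pi>))
          = (pns \<pi> - Phi U \<pi> (pimp \<sigma> \<pi>)) \<union> Phi U \<pi> (pimp \<tau> \<pi>)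
      \<and> pimp (pimp \<sigma> \<pi>) \<pi> \<in> Bpi U \<pi>
      \<and> Phi U \<pi> (pimp (pimp \<sigma> \<pi>) \<pi>) = pns \<pi> - Phi U \<pi> (pimp \<sigma> \<pi>))
   \<and> \<pi> = pimp (pdiscrete U) \<pi> \<and> \<pi> \<in> Bpi U \<pi> \<and> Phi U \<pi> \<pi> = {}
   \<and> pdiscrete U = pimp \<pi> \<pi> \<and> pdiscrete U \<in> Bpi U \<pi> \<and> Phi U \<pi> (pdiscrete U) = pns \<pi>
   \<and> (\<forall>\<rho>\<in>Bpi U \<pi>. \<forall>\<rho>'\<in>Bpi U \<pi>.
        pjoin \<rho> \<rho>' \<in> Bpi U \<pi> \<and> Phi U \<pi> (pjoin \<rho> \<rho>') = Phi U \<pi> \<rho> \<union> Phi U \<pi> \<rho>'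
      \<and> pmeet U \<rho> \<rho>' \<in> Bpi U \<pi> \<and> Phi U \<pi> (pmeet U \<rho> \<rho>') = Phi U \<pi> \<rho> \<inter> Phi U \<pi> \<rho>')
   \<and> (\<forall>\<rho>\<in>Bpi U \<pi>. pimp \<rho> \<pi> \<in> Bpi U \<pi> \<and> Phi U \<pi> (pimp \<rho> \<pi>) = pns \<pi> - Phi U \<pi> \<rho>)
   \<and> (\<forall>\<rho>\<in>Bpi U \<pi>. partition_on U \<rho> \<and> prefines \<pi> \<rho> \<and> prefines \<rho> (pdiscrete U))"
proof -
  note \<pi> = assms(2)
  have pimp_in_Bpi: "pimp \<sigma> \<pi> \<in> Bpi U \<pi>" if "partition_on U \<sigma>" for \<sigma>
    using that unfolding Bpi_def by blast
  have bottom: "pimp (pdiscrete U) \<pi> = \<pi>" "\<pi> \<in> Bpi U \<pi>" "Phi U \<pi> \<pi> = {}"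
    using pimp_pdiscrete[OF \<pi>] pimp_in_Bpi[OF partition_on_pdiscrete]
      Phi_pimp[OF \<pi> partition_on_pdiscrete] Phi_of_pdiscrete by metis+
  have top: "pimp \<pi> \<pi> = pdiscrete U" "pdiscrete U \<in> Bpi U \<pi>" "Phi U \<pi> (pdiscrete U) = pns \<pi>"
    using pimp_self[OF \<pi>] pimp_in_Bpi[OF \<pi>] Phi_pimp[OF \<pi> \<pi>] Phi_of_self by metis+
  have negation: "pimp \<rho> \<pi> \<in> Bpi U \<pi> \<and> Phi U \<pi> (pimp \<rho> \<pi>) = pns \<pi> - Phi U \<pi> \<rho>"
    if "\<rho> \<in> Bpi U \<pi>" for \<rho>
    using pimp_Bpi[OF \<pi> that bottom(2)] bottom(3) by simp
  have operations: "pjoin \<rho> \<rho>' \<in> Bpi U \<pi> \<and> Phi U \<pi> (pjoin \<rho> \<rho>') = Phi U \<pi> \<rho> \<union> Phi U \<pi> \<rho>'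
      \<and> pmeet U \<rho> \<rho>' \<in> Bpi U \<pi> \<and> Phi U \<pi> (pmeet U \<rho> \<rho>') = Phi U \<pi> \<rho> \<inter> Phi U \<pi> \<rho>'
      \<and> pimp \<rho> \<rho>' \<in> Bpi U \<pi> \<and> Phi U \<pi> (pimp \<rho> \<rho>') = (pns \<pi> - Phi U \<pi> \<rho>) \<union> Phi U \<pi> \<rho>'"
    if "\<rho> \<in> Bpi U \<pi>" "\<rho>' \<in> Bpi U \<pi>" for \<rho> \<rho>'
    using pjoin_Bpi[OF \<pi> that] pmeet_Bpi[OF \<pi> that] pimp_Bpi[OF \<pi> that] by simp
  show ?thesis
  proof (intro conjI)
    show "\<forall>\<sigma> \<sigma>'. partition_on U \<sigma> \<and> partition_on U \<sigma>' \<and> pimp \<sigma> \<pi> = pimp \<sigma>' \<pi>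
        \<longrightarrow> Phi_of \<pi> \<sigma> = Phi_of \<pi> \<sigma>'"
      using Phi_of_eq_if_pimp_eq[OF \<pi>] by blast
  qed (use Phi_pimp[OF \<pi>] bij_betw_Phi[OF \<pi>] bottom top operations negation pimp_in_Bpi
      Bpi_interval[OF \<pi>] in simp_all)
qed

end
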